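(* Let $(M,\varphi,\xi,\eta,g)$ be a Sasaki-like almost contact B-metric manifold which is Einstein-like and admits a Ricci-like soliton with potential $\xi$. Then its Ricci tensor $\rho$ is $\eta$-parallel, i.e. $(\nabla_x\rho)(\varphi y,\varphi z)=0$ for all vector fields $x,y,z$, and parallel along $\xi$, i.e. $\nabla_\xi\rho=0$.
   Context: An almost contact B-metric manifold $(M,\varphi,\xi,\eta,g)$ is a $(2n+1)$-dimensional manifold with a $(1,1)$-tensor $\varphi$, a vector field $\xi$, a 1-form $\eta$ and a pseudo-Riemannian metric $g$ of signature $(n+1,n)$ such that $\varphi\xi=0$, $\varphi^2=-\mathrm{Id}+\eta\otimes\xi$, $\eta\circ\varphi=0$, $\eta(\xi)=1$, and $g(\varphi x,\varphi y)=-g(x,y)+\eta(x)\eta(y)$. The associated B-metric is $\tilde g(x,y)=g(x,\varphi y)+\eta(x)\eta(y)$. With $\nabla$ the Levi-Civita connection of $g$, the manifold is Sasaki-like if $(\nabla_x\varphi)y=-g(x,y)\xi-\eta(y)x+2\eta(x)\eta(y)\xi$. Let $\rho$ be the Ricci tensor of $g$. The manifold is Einstein-like if $\rho=a g+b\tilde g+c\,\eta\otimes\eta$ for some constants $a,b,c$. It admits a Ricci-like soliton with potential vector field $v$ and constants $(\lambda,\mu,\nu)$ if $\frac12\mathcal L_v g+\rho+\lambda g+\mu\tilde g+\nu\,\eta\otimes\eta=0$, where $\mathcal L$ is the Lie derivative. *)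

theory Defs
  imports "HOL-Analysis.Analysis"
begin

text \<open>Local (coordinate) tensor calculus on an open domain U of real^'m.
  A vector field is a map real^'m => real^'m (components), a (1,1)-tensor field
  a matrix field, a 1-form a covector field (components), the metric a symmetric
  matrix field.\<close>

definition partial :: "'m::finite \<Rightarrow> (real^'m \<Rightarrow> real) \<Rightarrow> real^'m \<Rightarrow> real" where
  "partial i f p = deriv (\<lambda>t. f (p + t *\<^sub>R axis i 1)) 0"

fun iter_partial :: "'m::finite list \<Rightarrow> (real^'m \<Rightarrow> real) \<Rightarrow> real^'m \<Rightarrow> real" where
  "iter_partial [] f = f"
| "iter_partial (i # is) f = partial i (iter_partial is f)"

definition smooth_on :: "(real^'m::finite) set \<Rightarrow> (real^'m \<Rightarrow> real) \<Rightarrow> bool" where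
  "smooth_on U f \<longleftrightarrow> (\<forall>is. iter_partial is f differentiable_on U)"

definition bil :: "real^'m^'m \<Rightarrow> real^'m \<Rightarrow> real^'m \<Rightarrow> real" where
  "bil G x y = x \<bullet> (G *v y)"

definition has_signature :: "real^'m^'m::finite \<Rightarrow> nat \<Rightarrow> nat \<Rightarrow> bool" where
  "has_signature G p q \<longleftrightarrow>
     (\<exists>e :: 'm \<Rightarrow> real^'m. inj e \<and> independent (range e) \<and>
        (\<forall>a b. a \<noteq> b \<longrightarrow> bil G (e a) (e b) = 0) \<and>
        (\<forall>a. bil G (e a) (e a) = 1 \<or> bil G (e a) (e a) = -1) \<and>
        card {a. bil G (e a) (e a) = 1} = p \<and>
        card {a. bil G (e a) (e a) = -1} = q)"

definition christoffel :: "(real^'m \<Rightarrow> real^'m^'m) \<Rightarrow> real^'m \<Rightarrow> 'm::finite \<Rightarrow> 'm \<Rightarrow> 'm \<Rightarrow> real" where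
  "christoffel g p k i j =
     (1/2) * (\<Sum>l\<in>UNIV. matrix_inv (g p) $ k $ l *
        (partial i (\<lambda>q. g q $ j $ l) p + partial j (\<lambda>q. g q $ i $ l) p
         - partial l (\<lambda>q. g q $ i $ j) p))"

text \<open>Curvature: R(d_i,d_j)d_k = sum_l R^l_{ijk} d_l with
  R(X,Y) = [nabla_X, nabla_Y] - nabla_[X,Y].\<close>
definition riemann :: "(real^'m \<Rightarrow> real^'m^'m) \<Rightarrow> real^'m \<Rightarrow> 'm::finite \<Rightarrow> 'm \<Rightarrow> 'm \<Rightarrow> 'm \<Rightarrow> real" where
  "riemann g p l i j k =
     partial i (\<lambda>q. christoffel g q l j k) p - partial j (\<lambda>q. christoffel g q l i k) p
     + (\<Sum>m\<in>UNIV. christoffel g p l i m * christoffel g p m j k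
                 - christoffel g p l j m * christoffel g p m i k)"

definition ricci :: "(real^'m \<Rightarrow> real^'m^'m) \<Rightarrow> real^'m \<Rightarrow> 'm::finite \<Rightarrow> 'm \<Rightarrow> real" where
  "ricci g p j k = (\<Sum>i\<in>UNIV. riemann g p i i j k)"

definition nabla_ricci :: "(real^'m \<Rightarrow> real^'m^'m) \<Rightarrow> real^'m \<Rightarrow> 'm::finite \<Rightarrow> 'm \<Rightarrow> 'm \<Rightarrow> real" where
  "nabla_ricci g p i j k =
     partial i (\<lambda>q. ricci g q j k) p
     - (\<Sum>l\<in>UNIV. christoffel g p l i j * ricci g p l k)
     - (\<Sum>l\<in>UNIV. christoffel g p l i k * ricci g p j l)"

text \<open>k-th component of (nabla_{d_i} phi) d_j, with (phi y)^k = sum_j phi$k$j y_j.\<close>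
definition nabla_phi :: "(real^'m \<Rightarrow> real^'m^'m) \<Rightarrow> (real^'m \<Rightarrow> real^'m^'m) \<Rightarrow> real^'m
    \<Rightarrow> 'm::finite \<Rightarrow> 'm \<Rightarrow> 'm \<Rightarrow> real" where
  "nabla_phi g phi p i k j =
     partial i (\<lambda>q. phi q $ k $ j) p
     + (\<Sum>l\<in>UNIV. christoffel g p k i l * phi p $ l $ j)
     - (\<Sum>l\<in>UNIV. christoffel g p l i j * phi p $ k $ l)"

definition lie_g :: "(real^'m \<Rightarrow> real^'m^'m) \<Rightarrow> (real^'m \<Rightarrow> real^'m) \<Rightarrow> real^'m
    \<Rightarrow> 'm::finite \<Rightarrow> 'm \<Rightarrow> real" where
  "lie_g g v p i j =
     (\<Sum>k\<in>UNIV. v p $ k * partial k (\<lambda>q. g q $ i $ j) p)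
     + (\<Sum>k\<in>UNIV. g p $ k $ j * partial i (\<lambda>q. v q $ k) p)
     + (\<Sum>k\<in>UNIV. g p $ i $ k * partial j (\<lambda>q. v q $ k) p)"

definition gtilde :: "(real^'m \<Rightarrow> real^'m^'m) \<Rightarrow> (real^'m \<Rightarrow> real^'m^'m) \<Rightarrow> (real^'m \<Rightarrow> real^'m)
    \<Rightarrow> real^'m \<Rightarrow> 'm::finite \<Rightarrow> 'm \<Rightarrow> real" where
  "gtilde g phi eta p i j = (\<Sum>l\<in>UNIV. g p $ i $ l * phi p $ l $ j) + eta p $ i * eta p $ j"

definition almost_contact_B_metric ::
  "(real^'m::finite) set \<Rightarrow> nat \<Rightarrow> (real^'m \<Rightarrow> real^'m^'m) \<Rightarrow> (real^'m \<Rightarrow> real^'m)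
   \<Rightarrow> (real^'m \<Rightarrow> real^'m) \<Rightarrow> (real^'m \<Rightarrow> real^'m^'m) \<Rightarrow> bool" where
  "almost_contact_B_metric U n phi xi eta g \<longleftrightarrow>
     open U \<and> CARD('m) = 2 * n + 1 \<and>
     (\<forall>i j. smooth_on U (\<lambda>q. phi q $ i $ j)) \<and>
     (\<forall>i. smooth_on U (\<lambda>q. xi q $ i)) \<and>
     (\<forall>i. smooth_on U (\<lambda>q. eta q $ i)) \<and>
     (\<forall>i j. smooth_on U (\<lambda>q. g q $ i $ j)) \<and>
     (\<forall>p\<in>U.
        transpose (g p) = g p \<and> has_signature (g p) (n + 1) n \<and>
        phi p *v xi p = 0 \<and>
        (\<forall>x. phi p *v (phi p *v x) = - x + (eta p \<bullet> x) *\<^sub>R xi p) \<and>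
        (\<forall>x. eta p \<bullet> (phi p *v x) = 0) \<and>
        eta p \<bullet> xi p = 1 \<and>
        (\<forall>x y. bil (g p) (phi p *v x) (phi p *v y) = - bil (g p) x y + (eta p \<bullet> x) * (eta p \<bullet> y)))"

definition sasaki_like ::
  "(real^'m::finite) set \<Rightarrow> (real^'m \<Rightarrow> real^'m^'m) \<Rightarrow> (real^'m \<Rightarrow> real^'m)
   \<Rightarrow> (real^'m \<Rightarrow> real^'m) \<Rightarrow> (real^'m \<Rightarrow> real^'m^'m) \<Rightarrow> bool" where
  "sasaki_like U phi xi eta g \<longleftrightarrow>
     (\<forall>p\<in>U. \<forall>i j k. nabla_phi g phi p i k j =
        - g p $ i $ j * xi p $ k - eta p $ j * (if k = i then 1 else 0)
        + 2 * eta p $ i * eta p $ j * xi p $ k)"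

definition einstein_like ::
  "(real^'m::finite) set \<Rightarrow> (real^'m \<Rightarrow> real^'m^'m) \<Rightarrow> (real^'m \<Rightarrow> real^'m)
   \<Rightarrow> (real^'m \<Rightarrow> real^'m^'m) \<Rightarrow> bool" where
  "einstein_like U phi eta g \<longleftrightarrow>
     (\<exists>a b c :: real. \<forall>p\<in>U. \<forall>i j.
        ricci g p i j = a * g p $ i $ j + b * gtilde g phi eta p i j + c * eta p $ i * eta p $ j)"

definition ricci_like_soliton ::
  "(real^'m::finite) set \<Rightarrow> (real^'m \<Rightarrow> real^'m^'m) \<Rightarrow> (real^'m \<Rightarrow> real^'m)
   \<Rightarrow> (real^'m \<Rightarrow> real^'m^'m) \<Rightarrow> (real^'m \<Rightarrow> real^'m) \<Rightarrow> bool" where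
  "ricci_like_soliton U phi eta g v \<longleftrightarrow>
     (\<exists>lam mu nu :: real. \<forall>p\<in>U. \<forall>i j.
        (1/2) * lie_g g v p i j + ricci g p i j + lam * g p $ i $ j
        + mu * gtilde g phi eta p i j + nu * eta p $ i * eta p $ j = 0)"

end

theory Submission
  imports Defs
begin

text \<open>
  Sasaki-likeness prescribes \<open>\<nabla>\<phi>\<close> completely. Differentiating \<open>\<phi>\<xi> = 0\<close> and \<open>\<eta>(\<xi>) = 1\<close>
  then shows \<open>\<eta>(\<nabla>\<^sub>x\<xi>) = 0\<close> and \<open>\<phi>(\<nabla>\<^sub>x\<xi> + \<phi>x) = 0\<close>, hence \<open>\<nabla>\<xi> = -\<phi>\<close>. Lowering the
  index gives \<open>(\<nabla>\<^sub>x\<eta>)z = -g(\<phi>x, z)\<close>. For an Einstein-like metric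
  \<open>\<rho> = a g + b g(\<cdot>, \<phi>\<cdot>) + (b + c) \<eta>\<otimes>\<eta>\<close>, and \<open>\<nabla>g = 0\<close> leaves only
  \<open>\<nabla>\<rho> = b g(\<cdot>, (\<nabla>\<phi>)\<cdot>) + (b + c) \<nabla>(\<eta>\<otimes>\<eta>)\<close>. Substituting, one gets
  \<open>(\<nabla>\<^sub>x\<rho>)(y, z) = \<eta>(y) A(x, z) + \<eta>(z) A(x, y)\<close> with
  \<open>A(x, z) = b \<eta>(x) \<eta>(z) - b g(x, z) - (b + c) g(\<phi>x, z)\<close> and \<open>A(\<xi>, \<cdot>) = 0\<close>. Both claims
  follow, since \<open>\<eta>\<close> vanishes on the image of \<open>\<phi>\<close>.
\<close>

lemma has_real_derivative_partial:
  fixes f :: "real^'m::finite \<Rightarrow> real"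
  assumes "f differentiable at p"
  shows "((\<lambda>t. f (p + t *\<^sub>R axis i 1)) has_real_derivative partial i f p) (at 0)"
proof -
  have "(f \<circ> (\<lambda>t. p + t *\<^sub>R axis i 1)) differentiable at 0"
    by (rule differentiable_chain_at) (auto intro!: derivative_intros assms)
  then show ?thesis
    unfolding partial_def by (simp add: o_def DERIV_deriv_iff_real_differentiable)
qed

lemma partial_add:
  fixes f h :: "real^'m::finite \<Rightarrow> real"
  assumes "f differentiable at p" "h differentiable at p"
  shows "partial i (\<lambda>q. f q + h q) p = partial i f p + partial i h p"
  unfolding partial_def[of i "\<lambda>q. f q + h q"]
  by (intro DERIV_imp_deriv DERIV_add has_real_derivative_partial assms)

lemma partial_cmult:
  fixes f :: "real^'m::finite \<Rightarrow> real"
  assumes "f differentiable at p"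
  shows "partial i (\<lambda>q. c * f q) p = c * partial i f p"
  unfolding partial_def[of i "\<lambda>q. c * f q"]
  by (intro DERIV_imp_deriv DERIV_cmult has_real_derivative_partial assms)

lemma partial_mult:
  fixes f h :: "real^'m::finite \<Rightarrow> real"
  assumes "f differentiable at p" "h differentiable at p"
  shows "partial i (\<lambda>q. f q * h q) p = partial i f p * h p + f p * partial i h p"
proof -
  have "((\<lambda>t. f (p + t *\<^sub>R axis i 1) * h (p + t *\<^sub>R axis i 1)) has_real_derivative
      partial i f p * h (p + 0 *\<^sub>R axis i 1) + partial i h p * f (p + 0 *\<^sub>R axis i 1)) (at 0)"
    by (intro DERIV_mult has_real_derivative_partial assms)
  then show ?thesis
    unfolding partial_def[of i "\<lambda>q. f q * h q"] by (simp add: DERIV_imp_deriv)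
qed

lemma partial_sum:
  fixes f :: "'a \<Rightarrow> real^'m::finite \<Rightarrow> real"
  assumes "\<And>l. l \<in> S \<Longrightarrow> f l differentiable at p"
  shows "partial i (\<lambda>q. \<Sum>l\<in>S. f l q) p = (\<Sum>l\<in>S. partial i (f l) p)"
  unfolding partial_def[of i "\<lambda>q. \<Sum>l\<in>S. f l q"]
  by (intro DERIV_imp_deriv DERIV_sum has_real_derivative_partial assms)

lemma partial_cong_open:
  fixes f h :: "real^'m::finite \<Rightarrow> real"
  assumes "open U" "p \<in> U" "\<And>q. q \<in> U \<Longrightarrow> f q = h q"
  shows "partial i f p = partial i h p"
  unfolding partial_def
proof (rule deriv_cong_ev[OF _ refl])
  have "open ((\<lambda>t::real. p + t *\<^sub>R axis i 1) -` U)"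
    by (rule continuous_open_vimage[OF assms(1)]) (intro continuous_intros)
  moreover have "(0::real) \<in> (\<lambda>t::real. p + t *\<^sub>R axis i 1) -` U"
    using assms(2) by simp
  ultimately have "\<forall>\<^sub>F t in nhds 0. p + t *\<^sub>R axis i 1 \<in> U"
    using eventually_nhds_in_open by fastforce
  then show "\<forall>\<^sub>F t in nhds 0. f (p + t *\<^sub>R axis i 1) = h (p + t *\<^sub>R axis i 1)"
    by (rule eventually_mono) (simp add: assms(3))
qed

lemma partial_eq_0_if_constant_on:
  fixes f :: "real^'m::finite \<Rightarrow> real"
  assumes "open U" "p \<in> U" "\<And>q. q \<in> U \<Longrightarrow> f q = c"
  shows "partial i f p = 0"
proof -
  have "partial i f p = partial i (\<lambda>q. c) p"
    by (rule partial_cong_open[OF assms])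
  then show ?thesis by (simp add: partial_def)
qed

lemma smooth_on_imp_differentiable_at:
  assumes "smooth_on U f" "open U" "p \<in> U"
  shows "f differentiable at p"
  using assms iter_partial.simps(1)[of f]
  by (metis differentiable_on_eq_differentiable_at smooth_on_def)

lemma matrix_inv_right:
  fixes A :: "real^'m::finite^'m"
  assumes "invertible A"
  shows "A ** matrix_inv A = mat 1"
  using assms unfolding invertible_def matrix_inv_def by (metis (mono_tags, lifting) someI_ex)

lemma has_signature_imp_invertible:
  fixes G :: "real^'m::finite^'m"
  assumes "has_signature G p q"
  shows "invertible G"
proof -
  obtain e :: "'m \<Rightarrow> real^'m" where orth: "\<forall>a b. a \<noteq> b \<longrightarrow> bil G (e a) (e b) = 0"
    and unit: "\<forall>a. bil G (e a) (e a) = 1 \<or> bil G (e a) (e a) = -1"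
    using assms unfolding has_signature_def by (elim exE conjE) (rule that, assumption+)
  define M :: "real^'m^'m" where "M = (\<chi> a. e a)"
  have "M ** (G ** transpose M) = (\<chi> a b. bil G (e a) (e b))"
    by (simp add: M_def vec_eq_iff matrix_matrix_mult_def transpose_def bil_def inner_vec_def
        matrix_vector_mult_def)
  also have "det \<dots> = (\<Prod>a\<in>UNIV. bil G (e a) (e a))"
    by (rule trans[OF det_diagonal]) (use orth in auto)
  also have "\<dots> \<noteq> 0"
  proof -
    have "bil G (e a) (e a) \<noteq> 0" for a
      using unit by (metis one_neq_zero zero_neq_neg_one)
    then show ?thesis by simp
  qed
  finally show ?thesis by (simp add: det_mul invertible_det_nz)
qed

lemma transpose_eq_self_nth:
  assumes "transpose A = A"
  shows "A $ i $ j = A $ j $ i"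
  using arg_cong[OF assms, of "\<lambda>A. A $ j $ i"] by (simp add: transpose_def)

lemma christoffel_first_kind:
  assumes "transpose (g p) = g p" "invertible (g p)"
  shows "(\<Sum>l\<in>UNIV. christoffel g p l i j * g p $ l $ k) =
    1/2 * (partial i (\<lambda>q. g q $ j $ k) p + partial j (\<lambda>q. g q $ i $ k) p
           - partial k (\<lambda>q. g q $ i $ j) p)"
proof -
  define T where "T m = partial i (\<lambda>q. g q $ j $ m) p + partial j (\<lambda>q. g q $ i $ m) p
    - partial m (\<lambda>q. g q $ i $ j) p" for m
  define Gi where "Gi = matrix_inv (g p)"
  have inv: "(\<Sum>l\<in>UNIV. g p $ l $ k * Gi $ l $ m) = mat 1 $ k $ m" for m
  proof -
    have "g p $ l $ k = g p $ k $ l" for l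
      using assms(1) by (rule transpose_eq_self_nth)
    moreover have "(g p ** Gi) $ k $ m = mat 1 $ k $ m"
      using matrix_inv_right[OF assms(2)] by (simp add: Gi_def)
    ultimately show ?thesis by (simp add: matrix_matrix_mult_def)
  qed
  have "christoffel g p l i j = 1/2 * (\<Sum>m\<in>UNIV. Gi $ l $ m * T m)" for l
    by (simp add: christoffel_def T_def Gi_def)
  then have "(\<Sum>l\<in>UNIV. christoffel g p l i j * g p $ l $ k)
      = 1/2 * (\<Sum>l\<in>UNIV. \<Sum>m\<in>UNIV. g p $ l $ k * Gi $ l $ m * T m)"
    by (simp add: sum_distrib_left sum_distrib_right mult_ac)
  also have "\<dots> = 1/2 * (\<Sum>m\<in>UNIV. (\<Sum>l\<in>UNIV. g p $ l $ k * Gi $ l $ m) * T m)"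
    by (subst sum.swap) (simp add: sum_distrib_right)
  also have "\<dots> = 1/2 * T k"
  proof -
    have "(\<Sum>m\<in>UNIV. mat 1 $ k $ m * T m) = (\<Sum>m\<in>UNIV. if k = m then T m else 0)"
      by (intro sum.cong) (auto simp: mat_def)
    then show ?thesis by (simp add: inv)
  qed
  finally show ?thesis by (simp add: T_def)
qed

text \<open>Index conventions, matching those of \<^const>\<open>nabla_phi\<close> and \<^const>\<open>nabla_ricci\<close>:
  \<open>nabla_vector g X p i k\<close> is the \<open>k\<close>-th component of \<open>\<nabla>\<^sub>\<partial>\<^sub>i X\<close>,
  \<open>nabla_covector g H p i j = (\<nabla>\<^sub>\<partial>\<^sub>i H)(\<partial>\<^sub>j)\<close> and
  \<open>nabla_bilinear g T p i j k = (\<nabla>\<^sub>\<partial>\<^sub>i T)(\<partial>\<^sub>j, \<partial>\<^sub>k)\<close>.\<close>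

definition nabla_vector :: "(real^'m \<Rightarrow> real^'m^'m) \<Rightarrow> (real^'m \<Rightarrow> real^'m) \<Rightarrow> real^'m
    \<Rightarrow> 'm::finite \<Rightarrow> 'm \<Rightarrow> real" where
  "nabla_vector g X p i k = partial i (\<lambda>q. X q $ k) p + (\<Sum>l\<in>UNIV. christoffel g p k i l * X p $ l)"

definition nabla_covector :: "(real^'m \<Rightarrow> real^'m^'m) \<Rightarrow> (real^'m \<Rightarrow> real^'m) \<Rightarrow> real^'m
    \<Rightarrow> 'm::finite \<Rightarrow> 'm \<Rightarrow> real" where
  "nabla_covector g H p i j = partial i (\<lambda>q. H q $ j) p - (\<Sum>l\<in>UNIV. christoffel g p l i j * H p $ l)"

definition nabla_bilinear :: "(real^'m \<Rightarrow> real^'m^'m) \<Rightarrow> (real^'m \<Rightarrow> 'm \<Rightarrow> 'm \<Rightarrow> real) \<Rightarrow> real^'m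
    \<Rightarrow> 'm::finite \<Rightarrow> 'm \<Rightarrow> 'm \<Rightarrow> real" where
  "nabla_bilinear g T p i j k = partial i (\<lambda>q. T q j k) p
     - (\<Sum>l\<in>UNIV. christoffel g p l i j * T p l k) - (\<Sum>l\<in>UNIV. christoffel g p l i k * T p j l)"

lemma nabla_ricci_eq_nabla_bilinear: "nabla_ricci g p i j k = nabla_bilinear g (ricci g) p i j k"
  by (simp add: nabla_ricci_def nabla_bilinear_def)

lemma nabla_bilinear_cong_open:
  assumes "open U" "p \<in> U" "\<And>q j k. q \<in> U \<Longrightarrow> S q j k = T q j k"
  shows "nabla_bilinear g S p i j k = nabla_bilinear g T p i j k"
proof -
  have "partial i (\<lambda>q. S q j k) p = partial i (\<lambda>q. T q j k) p"
    using assms by (intro partial_cong_open) auto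
  then show ?thesis by (simp add: nabla_bilinear_def assms)
qed

lemma nabla_bilinear_add:
  assumes "\<And>j k. (\<lambda>q. S q j k) differentiable at p" "\<And>j k. (\<lambda>q. T q j k) differentiable at p"
  shows "nabla_bilinear g (\<lambda>q j k. S q j k + T q j k) p i j k
    = nabla_bilinear g S p i j k + nabla_bilinear g T p i j k"
  by (simp add: nabla_bilinear_def partial_add assms distrib_left sum.distrib)

lemma nabla_bilinear_cmult:
  assumes "\<And>j k. (\<lambda>q. T q j k) differentiable at p"
  shows "nabla_bilinear g (\<lambda>q j k. c * T q j k) p i j k = c * nabla_bilinear g T p i j k"
  by (simp add: nabla_bilinear_def partial_cmult assms right_diff_distrib sum_distrib_left mult.left_commute)

lemma nabla_bilinear_tensor_product:
  assumes "\<And>j. (\<lambda>q. H q $ j) differentiable at p" "\<And>k. (\<lambda>q. K q $ k) differentiable at p"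
  shows "nabla_bilinear g (\<lambda>q j k. H q $ j * K q $ k) p i j k
    = nabla_covector g H p i j * K p $ k + H p $ j * nabla_covector g K p i k"
  by (simp add: nabla_bilinear_def nabla_covector_def partial_mult assms algebra_simps
      sum_distrib_left sum_distrib_right)

lemma nabla_covector_apply_of_inner_constant:
  assumes "open U" "p \<in> U" "\<And>q. q \<in> U \<Longrightarrow> H q \<bullet> X q = c"
    and "\<And>j. (\<lambda>q. H q $ j) differentiable at p" "\<And>j. (\<lambda>q. X q $ j) differentiable at p"
  shows "(\<Sum>s\<in>UNIV. nabla_covector g H p i s * X p $ s) = - (\<Sum>s\<in>UNIV. H p $ s * nabla_vector g X p i s)"
proof -
  have "partial i (\<lambda>q. \<Sum>s\<in>UNIV. H q $ s * X q $ s) p = 0"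
    by (rule partial_eq_0_if_constant_on[OF assms(1,2)]) (use assms(3) in \<open>simp add: inner_vec_def\<close>)
  then have Leibniz: "(\<Sum>s\<in>UNIV. partial i (\<lambda>q. H q $ s) p * X p $ s + H p $ s * partial i (\<lambda>q. X q $ s) p) = 0"
    by (simp add: partial_sum partial_mult assms(4,5))
  have "(\<Sum>s\<in>UNIV. (\<Sum>l\<in>UNIV. christoffel g p l i s * H p $ l) * X p $ s)
      = (\<Sum>s\<in>UNIV. H p $ s * (\<Sum>l\<in>UNIV. christoffel g p s i l * X p $ l))"
    by (simp add: sum_distrib_left sum_distrib_right mult_ac) (subst sum.swap, simp add: mult_ac)
  with Leibniz show ?thesis
    by (simp add: nabla_covector_def nabla_vector_def algebra_simps sum.distrib sum_subtractf)
qed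

lemma nabla_phi_apply_of_kernel:
  assumes "open U" "p \<in> U" "\<And>q. q \<in> U \<Longrightarrow> phi q *v X q = 0"
    and "\<And>l m. (\<lambda>q. phi q $ l $ m) differentiable at p" "\<And>m. (\<lambda>q. X q $ m) differentiable at p"
  shows "(\<Sum>m\<in>UNIV. nabla_phi g phi p i l m * X p $ m) = - (\<Sum>s\<in>UNIV. phi p $ l $ s * nabla_vector g X p i s)"
proof -
  have kernel: "(\<Sum>m\<in>UNIV. phi q $ l $ m * X q $ m) = 0" if "q \<in> U" for q l
    using assms(3)[OF that] by (simp add: vec_eq_iff matrix_vector_mult_def)
  have "partial i (\<lambda>q. \<Sum>m\<in>UNIV. phi q $ l $ m * X q $ m) p = 0"
    using assms(1,2) kernel by (rule partial_eq_0_if_constant_on)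
  then have Leibniz: "(\<Sum>m\<in>UNIV. partial i (\<lambda>q. phi q $ l $ m) p * X p $ m
      + phi p $ l $ m * partial i (\<lambda>q. X q $ m) p) = 0"
    by (simp add: partial_sum partial_mult assms(4,5))
  have "(\<Sum>m\<in>UNIV. (\<Sum>s\<in>UNIV. christoffel g p l i s * phi p $ s $ m) * X p $ m)
      = (\<Sum>s\<in>UNIV. christoffel g p l i s * (\<Sum>m\<in>UNIV. phi p $ s $ m * X p $ m))"
    by (simp add: sum_distrib_left sum_distrib_right mult_ac) (subst sum.swap, simp add: mult_ac)
  also have "\<dots> = 0" using kernel assms(2) by simp
  finally have vanishing: "(\<Sum>m\<in>UNIV. (\<Sum>s\<in>UNIV. christoffel g p l i s * phi p $ s $ m) * X p $ m) = 0" .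
  have "(\<Sum>m\<in>UNIV. (\<Sum>s\<in>UNIV. christoffel g p s i m * phi p $ l $ s) * X p $ m)
      = (\<Sum>s\<in>UNIV. phi p $ l $ s * (\<Sum>m\<in>UNIV. christoffel g p s i m * X p $ m))"
    by (simp add: sum_distrib_left sum_distrib_right mult_ac) (subst sum.swap, simp add: mult_ac)
  with Leibniz vanishing show ?thesis
    by (simp add: nabla_phi_def nabla_vector_def algebra_simps sum.distrib sum_subtractf)
qed

locale metric_chart =
  fixes U :: "(real^'m::finite) set" and g :: "real^'m \<Rightarrow> real^'m^'m" and p :: "real^'m"
  assumes open_U: "open U" and p_in_U: "p \<in> U"
    and symmetric: "\<And>q. q \<in> U \<Longrightarrow> transpose (g q) = g q"
    and invertible_at: "invertible (g p)"
    and differentiable_metric: "\<And>j k. (\<lambda>q. g q $ j $ k) differentiable at p"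
begin

lemma metric_commute: "g p $ j $ k = g p $ k $ j"
  using symmetric[OF p_in_U] by (rule transpose_eq_self_nth)

lemma partial_metric:
  "partial i (\<lambda>q. g q $ j $ k) p
     = (\<Sum>l\<in>UNIV. christoffel g p l i j * g p $ l $ k) + (\<Sum>l\<in>UNIV. christoffel g p l i k * g p $ l $ j)"
proof -
  have swap: "partial i (\<lambda>q. g q $ k $ j) p = partial i (\<lambda>q. g q $ j $ k) p"
    using open_U p_in_U by (rule partial_cong_open) (use symmetric transpose_eq_self_nth in blast)
  note first_kind =
    christoffel_first_kind[where g = g and p = p, OF symmetric[OF p_in_U] invertible_at]
  show ?thesis
    unfolding first_kind[of i j k] first_kind[of i k j] swap by (simp add: field_simps)
qed

lemma nabla_bilinear_metric: "nabla_bilinear g (\<lambda>q j k. g q $ j $ k) p i j k = 0"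
  by (simp add: nabla_bilinear_def partial_metric metric_commute[of j])

lemma nabla_bilinear_metric_endomorphism:
  assumes "\<And>l k. (\<lambda>q. phi q $ l $ k) differentiable at p"
  shows "nabla_bilinear g (\<lambda>q j k. \<Sum>l\<in>UNIV. g q $ j $ l * phi q $ l $ k) p i j k
    = (\<Sum>l\<in>UNIV. g p $ j $ l * nabla_phi g phi p i l k)"
proof -
  let ?\<Gamma> = "christoffel g p"
  have "partial i (\<lambda>q. \<Sum>l\<in>UNIV. g q $ j $ l * phi q $ l $ k) p
      = (\<Sum>l\<in>UNIV. (\<Sum>m\<in>UNIV. ?\<Gamma> m i j * g p $ m $ l) * phi p $ l $ k)
      + (\<Sum>l\<in>UNIV. (\<Sum>m\<in>UNIV. ?\<Gamma> m i l * g p $ m $ j) * phi p $ l $ k)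
      + (\<Sum>l\<in>UNIV. g p $ j $ l * partial i (\<lambda>q. phi q $ l $ k) p)"
    by (simp add: partial_sum partial_mult assms differentiable_metric partial_metric
        distrib_right sum.distrib)
  moreover have "(\<Sum>l\<in>UNIV. (\<Sum>m\<in>UNIV. ?\<Gamma> m i j * g p $ m $ l) * phi p $ l $ k)
      = (\<Sum>m\<in>UNIV. ?\<Gamma> m i j * (\<Sum>l\<in>UNIV. g p $ m $ l * phi p $ l $ k))"
    by (simp add: sum_distrib_left sum_distrib_right mult_ac) (subst sum.swap, simp add: mult_ac)
  moreover have "(\<Sum>l\<in>UNIV. (\<Sum>m\<in>UNIV. ?\<Gamma> m i l * g p $ m $ j) * phi p $ l $ k)
      = (\<Sum>m\<in>UNIV. g p $ j $ m * (\<Sum>l\<in>UNIV. ?\<Gamma> m i l * phi p $ l $ k))"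
    by (simp add: sum_distrib_left sum_distrib_right metric_commute[of _ j] mult_ac)
      (subst sum.swap, simp add: mult_ac)
  moreover have "(\<Sum>l\<in>UNIV. g p $ j $ l * (\<Sum>m\<in>UNIV. ?\<Gamma> m i k * phi p $ l $ m))
      = (\<Sum>m\<in>UNIV. ?\<Gamma> m i k * (\<Sum>l\<in>UNIV. g p $ j $ l * phi p $ l $ m))"
    by (simp add: sum_distrib_left sum_distrib_right mult_ac) (subst sum.swap, simp add: mult_ac)
  ultimately show ?thesis
    by (simp add: nabla_bilinear_def nabla_phi_def algebra_simps sum.distrib sum_subtractf)
qed

lemma nabla_covector_lowered:
  assumes "\<And>q. q \<in> U \<Longrightarrow> H q = g q *v X q" "\<And>l. (\<lambda>q. X q $ l) differentiable at p"
  shows "nabla_covector g H p i j = (\<Sum>l\<in>UNIV. g p $ j $ l * nabla_vector g X p i l)"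
proof -
  let ?\<Gamma> = "christoffel g p"
  have "partial i (\<lambda>q. H q $ j) p = partial i (\<lambda>q. \<Sum>l\<in>UNIV. g q $ j $ l * X q $ l) p"
    using open_U p_in_U by (rule partial_cong_open) (simp add: assms(1) matrix_vector_mult_def)
  also have "\<dots> = (\<Sum>l\<in>UNIV. (\<Sum>m\<in>UNIV. ?\<Gamma> m i j * g p $ m $ l) * X p $ l)
      + (\<Sum>l\<in>UNIV. (\<Sum>m\<in>UNIV. ?\<Gamma> m i l * g p $ m $ j) * X p $ l)
      + (\<Sum>l\<in>UNIV. g p $ j $ l * partial i (\<lambda>q. X q $ l) p)"
    by (simp add: partial_sum partial_mult assms(2) differentiable_metric partial_metric
        distrib_right sum.distrib)
  moreover have "(\<Sum>l\<in>UNIV. (\<Sum>m\<in>UNIV. ?\<Gamma> m i j * g p $ m $ l) * X p $ l)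
      = (\<Sum>m\<in>UNIV. ?\<Gamma> m i j * H p $ m)"
    by (simp add: assms(1)[OF p_in_U] matrix_vector_mult_def sum_distrib_left sum_distrib_right mult_ac)
      (subst sum.swap, simp add: mult_ac)
  moreover have "(\<Sum>l\<in>UNIV. (\<Sum>m\<in>UNIV. ?\<Gamma> m i l * g p $ m $ j) * X p $ l)
      = (\<Sum>m\<in>UNIV. g p $ j $ m * (\<Sum>l\<in>UNIV. ?\<Gamma> m i l * X p $ l))"
    by (simp add: sum_distrib_left sum_distrib_right metric_commute[of _ j] mult_ac)
      (subst sum.swap, simp add: mult_ac)
  ultimately show ?thesis
    by (simp add: nabla_covector_def nabla_vector_def algebra_simps sum.distrib)
qed

lemma nabla_ricci_einstein_like:
  assumes "\<And>l k. (\<lambda>q. phi q $ l $ k) differentiable at p" "\<And>j. (\<lambda>q. eta q $ j) differentiable at p"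
    and "\<And>q j k. q \<in> U \<Longrightarrow>
      ricci g q j k = a * g q $ j $ k + b * gtilde g phi eta q j k + c * eta q $ j * eta q $ k"
  shows "nabla_ricci g p i j k = b * (\<Sum>l\<in>UNIV. g p $ j $ l * nabla_phi g phi p i l k)
    + (b + c) * (nabla_covector g eta p i j * eta p $ k + eta p $ j * nabla_covector g eta p i k)"
proof -
  have "nabla_ricci g p i j k = nabla_bilinear g (\<lambda>q j k. a * g q $ j $ k
      + (b * (\<Sum>l\<in>UNIV. g q $ j $ l * phi q $ l $ k) + (b + c) * (eta q $ j * eta q $ k))) p i j k"
    unfolding nabla_ricci_eq_nabla_bilinear using open_U p_in_U
    by (rule nabla_bilinear_cong_open) (simp add: assms(3) gtilde_def algebra_simps)
  also have "\<dots> = a * nabla_bilinear g (\<lambda>q j k. g q $ j $ k) p i j k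
      + (b * nabla_bilinear g (\<lambda>q j k. \<Sum>l\<in>UNIV. g q $ j $ l * phi q $ l $ k) p i j k
      + (b + c) * nabla_bilinear g (\<lambda>q j k. eta q $ j * eta q $ k) p i j k)"
    by (simp add: nabla_bilinear_add nabla_bilinear_cmult assms(1,2) differentiable_metric)
  finally show ?thesis
    by (simp add: nabla_bilinear_metric nabla_bilinear_metric_endomorphism
        nabla_bilinear_tensor_product assms(1,2))
qed

end

lemma almost_contact_B_metric_metric_chart:
  assumes "almost_contact_B_metric U n phi xi eta g" "p \<in> U"
  shows "metric_chart U g p"
proof
  show "(\<lambda>q. g q $ j $ k) differentiable at p" for j k
    using assms unfolding almost_contact_B_metric_def by (blast intro: smooth_on_imp_differentiable_at)
  show "invertible (g p)"
    using assms unfolding almost_contact_B_metric_def by (blast intro: has_signature_imp_invertible)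
qed (use assms in \<open>auto simp: almost_contact_B_metric_def\<close>)

lemma almost_contact_B_metric_differentiable:
  assumes "almost_contact_B_metric U n phi xi eta g" "p \<in> U"
  shows "(\<lambda>q. phi q $ l $ k) differentiable at p" "(\<lambda>q. xi q $ k) differentiable at p"
    "(\<lambda>q. eta q $ k) differentiable at p"
  using assms unfolding almost_contact_B_metric_def by (blast intro: smooth_on_imp_differentiable_at)+

lemma almost_contact_B_metricD:
  assumes "almost_contact_B_metric U n phi xi eta g" "p \<in> U"
  shows "phi p *v xi p = 0" "phi p *v (phi p *v x) = - x + (eta p \<bullet> x) *\<^sub>R xi p"
    "eta p \<bullet> (phi p *v x) = 0" "eta p \<bullet> xi p = 1"
    "bil (g p) (phi p *v x) (phi p *v y) = - bil (g p) x y + (eta p \<bullet> x) * (eta p \<bullet> y)"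
  using assms unfolding almost_contact_B_metric_def by blast+

lemma almost_contact_B_metric_eta_eq:
  assumes "almost_contact_B_metric U n phi xi eta g" "p \<in> U"
  shows "eta p = g p *v xi p"
proof -
  have "bil (g p) x (xi p) = eta p \<bullet> x" for x
    using almost_contact_B_metricD(5)[OF assms, of x "xi p"] almost_contact_B_metricD(1,4)[OF assms]
    by (simp add: bil_def)
  from this[of "axis i 1" for i] show ?thesis
    by (simp add: vec_eq_iff bil_def inner_axis inner_axis')
qed

lemma almost_contact_B_metric_eq_0:
  assumes "almost_contact_B_metric U n phi xi eta g" "p \<in> U"
    and "phi p *v v = 0" "eta p \<bullet> v = 0"
  shows "v = 0"
  using almost_contact_B_metricD(2)[OF assms(1,2), of v] assms(3,4) by simp

lemma almost_contact_B_metric_eta_nth: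
  assumes "almost_contact_B_metric U n phi xi eta g" "p \<in> U"
  shows "eta p $ j = (\<Sum>l\<in>UNIV. g p $ j $ l * xi p $ l)"
  using almost_contact_B_metric_eta_eq[OF assms] by (simp add: matrix_vector_mult_def)

lemma almost_contact_B_metric_eta_nabla_xi:
  assumes "almost_contact_B_metric U n phi xi eta g" "p \<in> U"
  shows "(\<Sum>s\<in>UNIV. eta p $ s * nabla_vector g xi p i s) = 0"
proof -
  interpret metric_chart U g p
    using assms by (rule almost_contact_B_metric_metric_chart)
  note differentiable = almost_contact_B_metric_differentiable[OF assms]
  let ?d = "nabla_vector g xi p i"
  have "(\<Sum>s\<in>UNIV. eta p $ s * ?d s) = - (\<Sum>s\<in>UNIV. nabla_covector g eta p i s * xi p $ s)"
    using nabla_covector_apply_of_inner_constant[OF open_U p_in_U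
        almost_contact_B_metricD(4)[OF assms(1)] differentiable(3,2)]
    by simp
  also have "(\<Sum>s\<in>UNIV. nabla_covector g eta p i s * xi p $ s)
      = (\<Sum>l\<in>UNIV. (\<Sum>s\<in>UNIV. g p $ l $ s * xi p $ s) * ?d l)"
  proof -
    have "nabla_covector g eta p i s = (\<Sum>l\<in>UNIV. g p $ l $ s * ?d l)" for s
      using nabla_covector_lowered[OF almost_contact_B_metric_eta_eq[OF assms(1)] differentiable(2)]
      by (simp add: metric_commute[of s])
    then show ?thesis
      by (simp add: sum_distrib_left sum_distrib_right mult_ac) (subst sum.swap, simp add: mult_ac)
  qed
  also have "\<dots> = (\<Sum>s\<in>UNIV. eta p $ s * ?d s)"
    by (simp add: almost_contact_B_metric_eta_nth[OF assms])
  finally show ?thesis by simp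
qed

lemma sasaki_likeD:
  assumes "sasaki_like U phi xi eta g" "p \<in> U"
  shows "nabla_phi g phi p i l k = - g p $ i $ k * xi p $ l - eta p $ k * (if l = i then 1 else 0)
    + 2 * eta p $ i * eta p $ k * xi p $ l"
  using assms unfolding sasaki_like_def by blast

lemma sasaki_like_nabla_phi_xi:
  assumes "almost_contact_B_metric U n phi xi eta g" "sasaki_like U phi xi eta g" "p \<in> U"
  shows "(\<Sum>m\<in>UNIV. nabla_phi g phi p i l m * xi p $ m) = eta p $ i * xi p $ l - (if l = i then 1 else 0)"
proof -
  have "nabla_phi g phi p i l m * xi p $ m = 2 * eta p $ i * xi p $ l * (eta p $ m * xi p $ m)
      - xi p $ l * (g p $ i $ m * xi p $ m) - (if l = i then eta p $ m * xi p $ m else 0)" for m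
    by (simp add: sasaki_likeD[OF assms(2,3)] algebra_simps)
  then have "(\<Sum>m\<in>UNIV. nabla_phi g phi p i l m * xi p $ m)
      = 2 * eta p $ i * xi p $ l * (eta p \<bullet> xi p) - xi p $ l * (\<Sum>m\<in>UNIV. g p $ i $ m * xi p $ m)
        - (if l = i then eta p \<bullet> xi p else 0)"
    by (simp add: sum_subtractf sum_distrib_left inner_vec_def)
  then show ?thesis
    by (simp add: almost_contact_B_metricD(4)[OF assms(1,3)]
        flip: almost_contact_B_metric_eta_nth[OF assms(1,3)])
qed

lemma sasaki_like_metric_nabla_phi:
  assumes "almost_contact_B_metric U n phi xi eta g" "sasaki_like U phi xi eta g" "p \<in> U"
  shows "(\<Sum>l\<in>UNIV. g p $ j $ l * nabla_phi g phi p i l k)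
    = 2 * eta p $ i * eta p $ j * eta p $ k - g p $ i $ k * eta p $ j - g p $ i $ j * eta p $ k"
proof -
  interpret metric_chart U g p
    using assms(1,3) by (rule almost_contact_B_metric_metric_chart)
  have "g p $ j $ l * nabla_phi g phi p i l k = (2 * eta p $ i * eta p $ k - g p $ i $ k)
      * (g p $ j $ l * xi p $ l) - (if l = i then eta p $ k * g p $ j $ i else 0)" for l
    by (simp add: sasaki_likeD[OF assms(2,3)] algebra_simps)
  then have "(\<Sum>l\<in>UNIV. g p $ j $ l * nabla_phi g phi p i l k)
      = (2 * eta p $ i * eta p $ k - g p $ i $ k) * eta p $ j - eta p $ k * g p $ j $ i"
    by (simp add: sum_subtractf sum_distrib_left almost_contact_B_metric_eta_nth[OF assms(1,3)])
  then show ?thesis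
    by (simp add: metric_commute[of j i] algebra_simps)
qed

lemma sasaki_like_nabla_xi:
  assumes "almost_contact_B_metric U n phi xi eta g" "sasaki_like U phi xi eta g" "p \<in> U"
  shows "nabla_vector g xi p i s = - phi p $ s $ i"
proof -
  interpret metric_chart U g p
    using assms(1,3) by (rule almost_contact_B_metric_metric_chart)
  note differentiable = almost_contact_B_metric_differentiable[OF assms(1,3)]
  note acB = almost_contact_B_metricD[OF assms(1)]
  define d where "d = (\<chi> s. nabla_vector g xi p i s)"
  have phi_d: "phi p *v d = axis i 1 - eta p $ i *\<^sub>R xi p"
  proof -
    have "(phi p *v d) $ l = - (\<Sum>m\<in>UNIV. nabla_phi g phi p i l m * xi p $ m)" for l
      using nabla_phi_apply_of_kernel[OF open_U p_in_U acB(1) differentiable(1,2)]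
      by (simp add: d_def matrix_vector_mult_def)
    then show ?thesis
      by (simp add: vec_eq_iff sasaki_like_nabla_phi_xi[OF assms] axis_def)
  qed
  have eta_d: "eta p \<bullet> d = 0"
    using almost_contact_B_metric_eta_nabla_xi[OF assms(1,3)] by (simp add: d_def inner_vec_def)
  have "d + phi p *v axis i 1 = 0"
  proof (rule almost_contact_B_metric_eq_0[OF assms(1,3)])
    show "phi p *v (d + phi p *v axis i 1) = 0"
      by (simp add: matrix_vector_right_distrib phi_d acB(2)[OF p_in_U] inner_axis inner_axis')
    show "eta p \<bullet> (d + phi p *v axis i 1) = 0"
      by (simp add: inner_add_right eta_d acB(3)[OF p_in_U])
  qed
  then have "d $ s + phi p $ s $ i = 0"
    by (simp add: vec_eq_iff matrix_vector_mult_basis column_def)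
  then show ?thesis by (simp add: d_def eq_neg_iff_add_eq_0)
qed

lemma sasaki_like_nabla_eta:
  assumes "almost_contact_B_metric U n phi xi eta g" "sasaki_like U phi xi eta g" "p \<in> U"
  shows "nabla_covector g eta p i j = - (g p ** phi p) $ j $ i"
proof -
  interpret metric_chart U g p
    using assms(1,3) by (rule almost_contact_B_metric_metric_chart)
  show ?thesis
    using nabla_covector_lowered[OF almost_contact_B_metric_eta_eq[OF assms(1)]
        almost_contact_B_metric_differentiable(2)[OF assms(1,3)]]
    by (simp add: sasaki_like_nabla_xi[OF assms] sum_negf matrix_matrix_mult_def)
qed

lemma nabla_ricci_sasaki_like_einstein_like:
  assumes "almost_contact_B_metric U n phi xi eta g" "sasaki_like U phi xi eta g" "p \<in> U"
    and "\<And>q j k. q \<in> U \<Longrightarrow>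
      ricci g q j k = a * g q $ j $ k + b * gtilde g phi eta q j k + c * eta q $ j * eta q $ k"
  obtains A where "\<And>i j k. nabla_ricci g p i j k = eta p $ j * A i k + eta p $ k * A i j"
    and "\<And>k. (\<Sum>i\<in>UNIV. xi p $ i * A i k) = 0"
proof -
  interpret metric_chart U g p
    using assms(1,3) by (rule almost_contact_B_metric_metric_chart)
  define A where "A i k = b * eta p $ i * eta p $ k - b * g p $ i $ k - (b + c) * (g p ** phi p) $ k $ i"
    for i k
  have "nabla_ricci g p i j k = eta p $ j * A i k + eta p $ k * A i j" for i j k
    using nabla_ricci_einstein_like[OF almost_contact_B_metric_differentiable(1,3)[OF assms(1,3)] assms(4)]
    by (simp add: sasaki_like_metric_nabla_phi[OF assms(1-3)] sasaki_like_nabla_eta[OF assms(1-3)]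
        A_def algebra_simps)
  moreover have "(\<Sum>i\<in>UNIV. xi p $ i * A i k) = 0" for k
  proof -
    have "xi p $ i * A i k = b * eta p $ k * (eta p $ i * xi p $ i) - b * (g p $ k $ i * xi p $ i)
        - (b + c) * ((g p ** phi p) $ k $ i * xi p $ i)" for i
      by (simp add: A_def metric_commute[of i k] algebra_simps)
    then have "(\<Sum>i\<in>UNIV. xi p $ i * A i k) = b * eta p $ k * (eta p \<bullet> xi p)
        - b * (g p *v xi p) $ k - (b + c) * ((g p ** phi p) *v xi p) $ k"
      by (simp add: sum_subtractf sum_distrib_left inner_vec_def matrix_vector_mult_def)
    then show ?thesis
      by (simp add: almost_contact_B_metricD(1,4)[OF assms(1,3)] flip: matrix_vector_mul_assoc
          almost_contact_B_metric_eta_eq[OF assms(1,3)])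
  qed
  ultimately show thesis by (rule that)
qed

lemma sum_eta_factor_eq_0:
  fixes eta x y z :: "real^'m::finite"
  assumes "eta \<bullet> y = 0" "eta \<bullet> z = 0"
  shows "(\<Sum>i\<in>UNIV. \<Sum>j\<in>UNIV. \<Sum>k\<in>UNIV. x $ i * (eta $ j * A i k + eta $ k * A i j) * y $ j * z $ k) = 0"
proof -
  have "(\<Sum>j\<in>UNIV. \<Sum>k\<in>UNIV. x $ i * (eta $ j * A i k + eta $ k * A i j) * y $ j * z $ k)
      = (\<Sum>j\<in>UNIV. \<Sum>k\<in>UNIV. x $ i * ((eta $ j * y $ j) * (A i k * z $ k)))
      + (\<Sum>j\<in>UNIV. \<Sum>k\<in>UNIV. x $ i * ((A i j * y $ j) * (eta $ k * z $ k)))" for i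
    by (simp add: sum.distrib algebra_simps)
  also have "\<dots> i = x $ i * ((eta \<bullet> y) * (\<Sum>k\<in>UNIV. A i k * z $ k))
      + x $ i * ((\<Sum>j\<in>UNIV. A i j * y $ j) * (eta \<bullet> z))" for i
    unfolding inner_vec_def inner_real_def by (simp only: sum_product) (simp only: sum_distrib_left)
  finally show ?thesis using assms by simp
qed

theorem mainTheorem2:
  fixes U :: "(real^'m::finite) set" and n :: nat
    and phi g :: "real^'m \<Rightarrow> real^'m^'m" and xi eta :: "real^'m \<Rightarrow> real^'m"
  assumes "almost_contact_B_metric U n phi xi eta g"
    and "sasaki_like U phi xi eta g"
    and "einstein_like U phi eta g"
    and "ricci_like_soliton U phi eta g xi"
  shows "\<forall>p\<in>U.
           (\<forall>x y z :: real^'m. (\<Sum>i\<in>UNIV. \<Sum>j\<in>UNIV. \<Sum>k\<in>UNIV.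
               x $ i * nabla_ricci g p i j k * (phi p *v y) $ j * (phi p *v z) $ k) = 0)
         \<and> (\<forall>j k. (\<Sum>i\<in>UNIV. xi p $ i * nabla_ricci g p i j k) = 0)"
proof
  fix p assume p: "p \<in> U"
  obtain a b c where einstein: "\<And>q j k. q \<in> U \<Longrightarrow>
      ricci g q j k = a * g q $ j $ k + b * gtilde g phi eta q j k + c * eta q $ j * eta q $ k"
    using assms(3) unfolding einstein_like_def by blast
  obtain A where nabla_ricci: "\<And>i j k. nabla_ricci g p i j k = eta p $ j * A i k + eta p $ k * A i j"
    and A_xi: "\<And>k. (\<Sum>i\<in>UNIV. xi p $ i * A i k) = 0"
    using nabla_ricci_sasaki_like_einstein_like[OF assms(1,2) p einstein] by blast
  have "(\<Sum>i\<in>UNIV. \<Sum>j\<in>UNIV. \<Sum>k\<in>UNIV.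
      x $ i * nabla_ricci g p i j k * (phi p *v y) $ j * (phi p *v z) $ k) = 0" for x y z
    unfolding nabla_ricci
    by (rule sum_eta_factor_eq_0) (simp_all add: almost_contact_B_metricD(3)[OF assms(1) p])
  moreover have "(\<Sum>i\<in>UNIV. xi p $ i * nabla_ricci g p i j k) = 0" for j k
  proof -
    have "(\<Sum>i\<in>UNIV. xi p $ i * nabla_ricci g p i j k)
        = eta p $ j * (\<Sum>i\<in>UNIV. xi p $ i * A i k) + eta p $ k * (\<Sum>i\<in>UNIV. xi p $ i * A i j)"
      by (simp add: nabla_ricci sum.distrib sum_distrib_left algebra_simps)
    then show ?thesis by (simp add: A_xi)
  qed
  ultimately show "(\<forall>x y z :: real^'m. (\<Sum>i\<in>UNIV. \<Sum>j\<in>UNIV. \<Sum>k\<in>UNIV.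
          x $ i * nabla_ricci g p i j k * (phi p *v y) $ j * (phi p *v z) $ k) = 0)
      \<and> (\<forall>j k. (\<Sum>i\<in>UNIV. xi p $ i * nabla_ricci g p i j k) = 0)"
    by blast
qed

end
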